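(* $\frac{\partial^2}{\partial y\,\partial x}\zeta(3,z)\ge 0$ for all $z=x+iy$ with $x\in[0,\frac12]$ and $y\in[\frac{\sqrt3}{2},\infty)$.
   Context: For $s>1$ and $z=x+iy$ with $y>0$, $\zeta(s,z)=\sum_{(m,n)\in\mathbb{Z}^2\setminus\{0\}}\frac{y^s}{|mz+n|^{2s}}$. *)

theory Defs
  imports "HOL-Analysis.Analysis"
begin

definition epstein_zeta :: "real \<Rightarrow> complex \<Rightarrow> real" where
  "epstein_zeta s z =
     infsum (\<lambda>(m::int, n::int). (Im z) powr s / (cmod (of_int m * z + of_int n)) powr (2 * s))
            (UNIV - {(0, 0)})"

end

theory Submission
  imports Defs
begin

(*
  Summing the lattice sum row by row, row m is a sum over n of ((m x + n)^2 + (m y)^2)^(-3).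
  The Poisson summation formula for (t^2 + a^2)^(-p-1), obtained for p = 0 from the partial
  fraction expansion of the cotangent and for larger p by differentiating in a, turns row m
  into a rapidly converging Fourier series in m x. Hence, with C = 2 pi j m and w_0 = 1,
  w_j = 2 for j >= 1,

    zeta(3, x + i y) = 2 zeta(6) y^3
      + sum over m >= 1, j >= 0 of  w_j pi / (4 m^5) cos (C x) exp (- C y) (C^2 + 3 C / y + 3 / y^2),

  and the mixed derivative d^2 / dy dx may be taken term by term. For 0 <= x <= 1/2 its term
  (m, j) = (1, 1) is Q = pi^2 sin (2 pi x) exp (- 2 pi y) P(y) >= 0 with P(y) > 0, and
  |sin (N t)| <= N sin t bounds the term (m, j), j >= 1, by Q (32 r)^(j - 1) r^(m - 1) where
  r = exp (- 2 pi y) <= 1/80; the terms with j = 0 vanish. These bounds sum to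
  Q / ((1 - r) (1 - 32 r)) <= 2 Q, so the terms other than (1, 1) add up to at least - Q.
*)

section \<open>Series: termwise differentiation, exponential decay, sums over \<open>\<int>\<close>\<close>

lemma has_real_derivative_suminf:
  fixes f f' :: "nat \<Rightarrow> real \<Rightarrow> real"
  assumes deriv: "\<And>n t. t \<in> {l<..<r} \<Longrightarrow> (f n has_real_derivative f' n t) (at t)"
    and bound: "\<And>n t. t \<in> {l<..<r} \<Longrightarrow> \<bar>f' n t\<bar> \<le> M n" and M: "summable M"
    and t0: "t0 \<in> {l<..<r}" "summable (\<lambda>n. f n t0)" and t: "t \<in> {l<..<r}"
  shows "summable (\<lambda>n. f n t)" "summable (\<lambda>n. f' n t)"
    and "((\<lambda>t. \<Sum>n. f n t) has_real_derivative (\<Sum>n. f' n t)) (at t)"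
proof -
  have conv: "uniformly_convergent_on {l<..<r} (\<lambda>n t. \<Sum>i<n. f' i t)"
    unfolding uniformly_convergent_on_def
    by (rule exI, rule Weierstrass_m_test[OF _ M]) (use bound in auto)
  have within: "(f n has_field_derivative f' n s) (at s within {l<..<r})" if "s \<in> {l<..<r}" for n s
    using deriv[OF that] by (rule has_field_derivative_at_within)
  have "t \<in> interior {l<..<r}"
    using t by simp
  note series = has_field_derivative_series'[of "{l<..<r}" f f' t0 t, OF convex_real_interval(8) within conv t0 this]
  show "summable (\<lambda>n. f n t)"
    by (rule series(1))
  show "((\<lambda>t. \<Sum>n. f n t) has_real_derivative (\<Sum>n. f' n t)) (at t)"
    by (rule series(2))
  show "summable (\<lambda>n. f' n t)"
    by (rule summable_comparison_test'[OF M, of 0]) (use bound t in auto)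
qed

lemma has_real_derivative_suminf_suminf:
  fixes f f' :: "nat \<Rightarrow> nat \<Rightarrow> real \<Rightarrow> real"
  assumes deriv: "\<And>k j t. t \<in> {l<..<r} \<Longrightarrow> (f k j has_real_derivative f' k j t) (at t)"
    and bound: "\<And>k j t. t \<in> {l<..<r} \<Longrightarrow> \<bar>f' k j t\<bar> \<le> M k j"
    and M: "\<And>k. summable (M k)" "summable (\<lambda>k. \<Sum>j. M k j)"
    and t0: "t0 \<in> {l<..<r}" "\<And>k. summable (\<lambda>j. f k j t0)" "summable (\<lambda>k. \<Sum>j. f k j t0)"
    and t: "t \<in> {l<..<r}"
  shows "summable (\<lambda>j. f' k j t)" "summable (\<lambda>k. \<Sum>j. f' k j t)"
    and "((\<lambda>t. \<Sum>k. \<Sum>j. f k j t) has_real_derivative (\<Sum>k. \<Sum>j. f' k j t)) (at t)"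
proof -
  have inner: "summable (\<lambda>j. f' k j s)"
    "((\<lambda>t. \<Sum>j. f k j t) has_real_derivative (\<Sum>j. f' k j s)) (at s)"
    if "s \<in> {l<..<r}" for k s
    using has_real_derivative_suminf[of l r "f k" "f' k" "M k", OF deriv bound M(1) t0(1,2) that]
    by simp_all
  have "\<bar>\<Sum>j. f' k j s\<bar> \<le> (\<Sum>j. M k j)" if "s \<in> {l<..<r}" for k s
  proof -
    have "summable (\<lambda>j. \<bar>f' k j s\<bar>)"
      by (rule summable_comparison_test'[OF M(1), of 0]) (use bound that in auto)
    then have "\<bar>\<Sum>j. f' k j s\<bar> \<le> (\<Sum>j. \<bar>f' k j s\<bar>)"
      using summable_norm[of "\<lambda>j. f' k j s"] by simp
    also have "\<dots> \<le> (\<Sum>j. M k j)"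
      by (rule suminf_le) (use bound that M(1) \<open>summable (\<lambda>j. \<bar>f' k j s\<bar>)\<close> in auto)
    finally show ?thesis .
  qed
  note outer = has_real_derivative_suminf[of l r "\<lambda>k t. \<Sum>j. f k j t" "\<lambda>k t. \<Sum>j. f' k j t",
      OF inner(2) this M(2) t0(1,3) t]
  show "summable (\<lambda>k. \<Sum>j. f' k j t)"
    by (rule outer(2))
  show "((\<lambda>t. \<Sum>k. \<Sum>j. f k j t) has_real_derivative (\<Sum>k. \<Sum>j. f' k j t)) (at t)"
    by (rule outer(3))
  show "summable (\<lambda>j. f' k j t)"
    by (rule inner(1)[OF t])
qed

lemma power_le_exp_mult:
  fixes x b :: real
  assumes "0 \<le> x" "0 < b"
  shows "x ^ p \<le> (real p / b) ^ p * exp (b * x)"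
proof (cases "p = 0")
  case False
  have "b * x / real p \<le> exp (b * x / real p)"
    using exp_ge_add_one_self[of "b * x / real p"] by linarith
  then have "(b * x / real p) ^ p \<le> exp (b * x / real p) ^ p"
    using assms by (intro power_mono) auto
  also have "\<dots> = exp (b * x)"
    using False by (simp flip: exp_of_nat_mult)
  finally have "(real p / b) ^ p * (b * x / real p) ^ p \<le> (real p / b) ^ p * exp (b * x)"
    using assms by (intro mult_left_mono) auto
  also have "(real p / b) ^ p * (b * x / real p) ^ p = x ^ p"
    using False assms by (simp flip: power_mult_distrib)
  finally show ?thesis .
next
  case True
  then show ?thesis
    using assms by simp
qed

lemma power_mult_exp_neg_le_exp_half:
  fixes c :: real
  assumes "0 < c"
  obtains K where "\<And>s. 0 \<le> s \<Longrightarrow> (1 + s) ^ p * exp (- (c * s)) \<le> K * exp (- (c * s) / 2)"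
proof
  fix s :: real
  assume "0 \<le> s"
  then have "(1 + s) ^ p * exp (- (c * s)) \<le> (real p / (c / 2)) ^ p * exp (c / 2 * (1 + s)) * exp (- (c * s))"
    using assms by (intro mult_right_mono power_le_exp_mult) auto
  also have "\<dots> = (real p / (c / 2)) ^ p * exp (c / 2) * exp (- (c * s) / 2)"
    by (simp add: mult.assoc flip: exp_add) (simp add: field_simps)
  finally show "(1 + s) ^ p * exp (- (c * s)) \<le> (real p / (c / 2)) ^ p * exp (c / 2) * exp (- (c * s) / 2)" .
qed

lemma summable_double_geometric:
  fixes \<rho> :: real
  assumes "0 \<le> \<rho>" "\<rho> < 1"
  shows "summable (\<lambda>j. K * (\<rho> ^ j * \<rho> ^ k))" "summable (\<lambda>k. \<Sum>j. K * (\<rho> ^ j * \<rho> ^ k))"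
proof -
  have g: "summable (\<lambda>j. \<rho> ^ j)"
    using assms by (intro summable_geometric) auto
  then show "summable (\<lambda>j. K * (\<rho> ^ j * \<rho> ^ k))" for k
    using summable_mult2[OF g, of "\<rho> ^ k"] summable_mult by blast
  have "(\<Sum>j. K * (\<rho> ^ j * \<rho> ^ k)) = K * (\<Sum>j. \<rho> ^ j) * \<rho> ^ k" for k
    using suminf_mult[OF g, of "K * \<rho> ^ k"] by (simp add: ac_simps)
  moreover have "summable (\<lambda>k. K * (\<Sum>j. \<rho> ^ j) * \<rho> ^ k)"
    using assms by (intro summable_mult summable_geometric) auto
  ultimately show "summable (\<lambda>k. \<Sum>j. K * (\<rho> ^ j * \<rho> ^ k))"
    by simp
qed

lemma has_sum_int_nonneg_halves:
  fixes f :: "int \<Rightarrow> real"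
  assumes nonneg: "\<And>n. 0 \<le> f n"
    and "(\<lambda>n. f (int n)) sums S1" and "(\<lambda>n. f (- int n - 1)) sums S2"
  shows "(f has_sum (S1 + S2)) UNIV"
proof -
  have inj: "inj int" "inj (\<lambda>n::nat. - int n - 1)"
    by (auto simp: inj_def)
  have "((f \<circ> int) has_sum S1) UNIV" "((f \<circ> (\<lambda>n. - int n - 1)) has_sum S2) UNIV"
    using assms by (simp_all add: o_def sums_nonneg_imp_has_sum)
  then have "(f has_sum S1) (range int)" "(f has_sum S2) (range (\<lambda>n::nat. - int n - 1))"
    by (simp_all only: has_sum_reindex[OF inj(1)] has_sum_reindex[OF inj(2)])
  then have "(f has_sum (S1 + S2)) (range int \<union> range (\<lambda>n::nat. - int n - 1))"
    by (rule has_sum_Un_disjoint) auto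
  also have "range int \<union> range (\<lambda>n::nat. - int n - 1) = UNIV"
  proof -
    have "z \<in> range int \<union> range (\<lambda>n::nat. - int n - 1)" for z
    proof (cases z rule: int_cases)
      case (neg n)
      then show ?thesis by (simp add: image_iff)
    qed simp
    then show ?thesis by blast
  qed
  finally show ?thesis .
qed

lemma has_sum_int_nonneg_pairs:
  fixes f :: "int \<Rightarrow> real"
  assumes nonneg: "\<And>n. 0 \<le> f n" and S: "(\<lambda>n. f (int n) + f (- int n - 1)) sums S"
  shows "(f has_sum S) UNIV"
proof -
  have "summable (\<lambda>n. f (int n))" "summable (\<lambda>n. f (- int n - 1))"
    by (rule summable_comparison_test'[OF sums_summable[OF S], of 0], use nonneg in simp)+
  then have halves: "(\<lambda>n. f (int n)) sums (\<Sum>n. f (int n))"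
    "(\<lambda>n. f (- int n - 1)) sums (\<Sum>n. f (- int n - 1))"
    by (simp_all add: summable_sums)
  have "S = (\<Sum>n. f (int n)) + (\<Sum>n. f (- int n - 1))"
    by (rule sums_unique2[OF S sums_add[OF halves]])
  then show ?thesis
    using has_sum_int_nonneg_halves[OF nonneg halves] by simp
qed

lemma summable_on_inverse_int_power:
  assumes "2 \<le> s"
  shows "(\<lambda>n::int. 1 / \<bar>real_of_int n\<bar> ^ s) summable_on - {0}"
proof -
  have "summable (\<lambda>n. inverse (real n ^ s))"
    using inverse_power_summable[OF assms] by simp
  \<comment> \<open>the term \<open>n = 0\<close> is \<open>1 / 0 = 0\<close>\<close>
  then have "(\<lambda>n. 1 / \<bar>real_of_int (int n)\<bar> ^ s) sums (\<Sum>n. inverse (real n ^ s))"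
    "(\<lambda>n. 1 / \<bar>real_of_int (- int n - 1)\<bar> ^ s) sums (\<Sum>n. inverse (real (Suc n) ^ s))"
    using summable_Suc_iff[of "\<lambda>n. inverse (real n ^ s)"]
    by (simp_all add: summable_sums divide_inverse add.commute)
  from has_sum_int_nonneg_halves[OF _ this]
  have "(\<lambda>n::int. 1 / \<bar>real_of_int n\<bar> ^ s) summable_on UNIV"
    by (auto simp: summable_on_def)
  then show ?thesis
    by (rule summable_on_subset_banach) simp
qed

section \<open>Poisson summation for powers of \<open>t\<^sup>2 + a\<^sup>2\<close>\<close>

fun rev_bessel :: "nat \<Rightarrow> real \<Rightarrow> real" where
  "rev_bessel 0 s = 1"
| "rev_bessel (Suc 0) s = s + 1"
| "rev_bessel (Suc (Suc p)) s = (2 * real p + 3) * rev_bessel (Suc p) s + s\<^sup>2 * rev_bessel p s"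

lemma rev_bessel_recurrence:
  obtains d where "\<And>s. (rev_bessel p has_real_derivative d s) (at s)"
    and "\<And>s. rev_bessel (Suc p) s = (2 * real p + 1) * rev_bessel p s + s * (rev_bessel p s - d s)"
proof -
  have deriv: "(rev_bessel p has_real_derivative
      (if p = 0 then 0 else rev_bessel p s - s * rev_bessel (p - 1) s)) (at s)" for p s
  proof (induction p s rule: rev_bessel.induct)
    case (3 p s)
    have "rev_bessel (Suc (Suc p)) = (\<lambda>s. (2 * real p + 3) * rev_bessel (Suc p) s + s\<^sup>2 * rev_bessel p s)"
      by (rule ext) simp
    moreover have "((\<lambda>s. (2 * real p + 3) * rev_bessel (Suc p) s + s\<^sup>2 * rev_bessel p s) has_real_derivative
        (2 * real p + 3) * (rev_bessel (Suc p) s - s * rev_bessel p s) +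
        (2 * s * rev_bessel p s + s\<^sup>2 * (if p = 0 then 0 else rev_bessel p s - s * rev_bessel (p - 1) s))) (at s)"
      using "3.IH" by (auto intro!: derivative_eq_intros)
    moreover have "(2 * real p + 3) * (rev_bessel (Suc p) s - s * rev_bessel p s) +
        (2 * s * rev_bessel p s + s\<^sup>2 * (if p = 0 then 0 else rev_bessel p s - s * rev_bessel (p - 1) s))
        = rev_bessel (Suc (Suc p)) s - s * rev_bessel (Suc p) s"
      by (cases p) (simp_all add: algebra_simps power2_eq_square)
    ultimately show ?case
      by simp
  qed (auto intro!: derivative_eq_intros)
  show ?thesis
    by (rule that[OF deriv]) (cases p, simp_all add: power2_eq_square)
qed

lemma rev_bessel_nonneg: "0 \<le> s \<Longrightarrow> 0 \<le> rev_bessel p s"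
  by (induction p s rule: rev_bessel.induct) auto

lemma rev_bessel_le: "0 \<le> s \<Longrightarrow> rev_bessel p s \<le> rev_bessel p 1 * (1 + s) ^ p"
proof (induction p s rule: rev_bessel.induct)
  case (3 p s)
  have "(1 + s) ^ Suc p \<le> (1 + s) ^ Suc (Suc p)"
    using "3.prems" by (intro power_increasing) auto
  moreover have "s\<^sup>2 * (1 + s) ^ p \<le> (1 + s)\<^sup>2 * (1 + s) ^ p"
    using "3.prems" by (intro mult_right_mono power_mono) auto
  ultimately have pow: "(1 + s) ^ Suc p \<le> (1 + s) ^ Suc (Suc p)" "s\<^sup>2 * (1 + s) ^ p \<le> (1 + s) ^ Suc (Suc p)"
    by (simp_all add: power2_eq_square)
  have "s\<^sup>2 * rev_bessel p s \<le> rev_bessel p 1 * (s\<^sup>2 * (1 + s) ^ p)"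
    using mult_left_mono[OF "3.IH"(2)[OF "3.prems"], of "s\<^sup>2"] by (simp add: ac_simps)
  moreover have "(2 * real p + 3) * rev_bessel (Suc p) s \<le> (2 * real p + 3) * (rev_bessel (Suc p) 1 * (1 + s) ^ Suc p)"
    using "3.IH"(1)[OF "3.prems"] by (intro mult_left_mono) auto
  ultimately have "rev_bessel (Suc (Suc p)) s
      \<le> (2 * real p + 3) * (rev_bessel (Suc p) 1 * (1 + s) ^ Suc p) + rev_bessel p 1 * (s\<^sup>2 * (1 + s) ^ p)"
    by (simp only: rev_bessel.simps)
  also have "\<dots> \<le> (2 * real p + 3) * (rev_bessel (Suc p) 1 * (1 + s) ^ Suc (Suc p)) + rev_bessel p 1 * (1 + s) ^ Suc (Suc p)"
    by (intro add_mono mult_left_mono pow) (auto intro: rev_bessel_nonneg)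
  also have "\<dots> = rev_bessel (Suc (Suc p)) 1 * (1 + s) ^ Suc (Suc p)"
    by (simp add: algebra_simps)
  finally show ?case .
qed auto

(* For c >= 0, pi * lorentz_ft p c a is the Fourier transform at frequency c of
   t -> (t^2 + a^2)^(-p-1), i.e. the integral of cos (c t) / (t^2 + a^2)^(p+1) over the real line;
   rev_bessel p is the reverse Bessel polynomial of degree p. *)
definition lorentz_ft :: "nat \<Rightarrow> real \<Rightarrow> real \<Rightarrow> real" where
  "lorentz_ft p c a = exp (- (c * a)) * rev_bessel p (c * a) / (2 ^ p * fact p * a ^ (2 * p + 1))"

lemma lorentz_ft_has_derivative:
  assumes "0 < a"
  shows "(lorentz_ft p c has_real_derivative - (2 * real (Suc p) * a) * lorentz_ft (Suc p) c a) (at a)"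
proof -
  obtain d where d: "\<And>s. (rev_bessel p has_real_derivative d s) (at s)"
    and rec: "\<And>s. rev_bessel (Suc p) s = (2 * real p + 1) * rev_bessel p s + s * (rev_bessel p s - d s)"
    using rev_bessel_recurrence[of p] by blast
  define N :: real where "N = 2 ^ p * fact p"
  have N: "0 < N"
    by (simp add: N_def)
  define A where "A = a ^ (2 * p)"
  have A: "0 < A" "a ^ (2 * p + 1) = a * A" "a ^ (2 * Suc p + 1) = a ^ 3 * A"
    using assms by (simp_all add: A_def power_add eval_nat_numeral)
  have "lorentz_ft p c = (\<lambda>a. exp (- (c * a)) * rev_bessel p (c * a) / (N * a ^ (2 * p + 1)))"
    by (simp add: lorentz_ft_def N_def fun_eq_iff)
  moreover have "((\<lambda>a. exp (- (c * a)) * rev_bessel p (c * a) / (N * a ^ (2 * p + 1))) has_real_derivative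
      ((exp (- (c * a)) * (- c) * rev_bessel p (c * a) + exp (- (c * a)) * (d (c * a) * c)) * (N * a ^ (2 * p + 1))
      - exp (- (c * a)) * rev_bessel p (c * a) * (N * (real (2 * p + 1) * a ^ (2 * p))))
      / (N * a ^ (2 * p + 1) * (N * a ^ (2 * p + 1)))) (at a)"
  proof (rule DERIV_divide)
    show "((\<lambda>a. exp (- (c * a)) * rev_bessel p (c * a)) has_real_derivative
        exp (- (c * a)) * (- c) * rev_bessel p (c * a) + exp (- (c * a)) * (d (c * a) * c)) (at a)"
      by (auto intro!: derivative_eq_intros DERIV_chain2[OF d])
    show "((\<lambda>a. N * a ^ (2 * p + 1)) has_real_derivative N * (real (2 * p + 1) * a ^ (2 * p))) (at a)"
      using DERIV_cmult[OF DERIV_pow[of "2 * p + 1" a UNIV], of N] by simp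
  qed (use assms N in simp)
  moreover have "((exp (- (c * a)) * (- c) * rev_bessel p (c * a) + exp (- (c * a)) * (d (c * a) * c)) * (N * a ^ (2 * p + 1))
      - exp (- (c * a)) * rev_bessel p (c * a) * (N * (real (2 * p + 1) * a ^ (2 * p))))
      / (N * a ^ (2 * p + 1) * (N * a ^ (2 * p + 1)))
      = - (2 * real (Suc p) * a) * lorentz_ft (Suc p) c a"
  proof -
    have ft: "lorentz_ft (Suc p) c a = exp (- (c * a)) * rev_bessel (Suc p) (c * a) / (2 * real (Suc p) * N * (a ^ 3 * A))"
      unfolding lorentz_ft_def A(3) by (simp add: N_def)
    have key: "((E * (- c) * T + E * (D * c)) * (N * (a * A)) - E * T * (N * ((2 * q - 1) * A)))
        / (N * (a * A) * (N * (a * A)))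
        = - (2 * q * a) * (E * ((2 * q - 1) * T + c * a * (T - D)) / (2 * q * N * (a ^ 3 * A)))"
      if "0 < q" for E T D q :: real
      using assms N A that by (simp add: field_simps eval_nat_numeral)
    have q: "real (2 * p + 1) = 2 * real (Suc p) - 1" "2 * real p + 1 = 2 * real (Suc p) - 1"
      by simp_all
    show ?thesis
      unfolding ft A(2) rec A_def[symmetric] q by (rule key) simp
  qed
  ultimately show ?thesis
    by simp
qed

lemma abs_lorentz_ft_le:
  assumes "0 < d"
  obtains K where "\<And>c a. 0 \<le> c \<Longrightarrow> d \<le> a \<Longrightarrow> \<bar>lorentz_ft p c a\<bar> \<le> K * exp (- (c * d) / 2) / a ^ (2 * p + 1)"
proof -
  obtain K where K: "\<And>s::real. 0 \<le> s \<Longrightarrow> (1 + s) ^ p * exp (- (1 * s)) \<le> K * exp (- (1 * s) / 2)"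
    using power_mult_exp_neg_le_exp_half[of 1 p] by auto
  show ?thesis
  proof (rule that)
    fix c a :: real
    assume c: "0 \<le> c" and a: "d \<le> a"
    define s where "s = c * a"
    define D :: real where "D = 2 ^ p * fact p * a ^ (2 * p + 1)"
    have s: "0 \<le> s" "c * d \<le> s"
      using assms c a by (simp_all add: s_def mult_left_mono)
    have D: "0 < D"
      using assms a by (simp add: D_def)
    have "\<bar>lorentz_ft p c a\<bar> = exp (- s) * rev_bessel p s / D"
      using s D rev_bessel_nonneg[of s p] by (simp add: lorentz_ft_def s_def D_def)
    also have "\<dots> \<le> exp (- s) * (rev_bessel p 1 * (1 + s) ^ p) / D"
      using D by (intro divide_right_mono mult_left_mono rev_bessel_le s(1)) simp_all
    also have "\<dots> = rev_bessel p 1 * ((1 + s) ^ p * exp (- s)) / D"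
      by (simp add: ac_simps)
    also have "\<dots> \<le> rev_bessel p 1 * (K * exp (- (c * d) / 2)) / D"
    proof -
      have "(1 + s) ^ p * exp (- s) \<le> K * exp (- s / 2)"
        using K[OF s(1)] by simp
      also have "\<dots> \<le> K * exp (- (c * d) / 2)"
        using K[of 0] s by (intro mult_left_mono) auto
      finally show ?thesis
        using D rev_bessel_nonneg[of 1 p] by (intro divide_right_mono mult_left_mono) auto
    qed
    finally show "\<bar>lorentz_ft p c a\<bar> \<le> rev_bessel p 1 * K / (2 ^ p * fact p) * exp (- (c * d) / 2) / a ^ (2 * p + 1)"
      by (simp add: D_def field_simps)
  qed
qed

(* The Fourier modes k and -k of an even function combine into 2 cos; mode 0 is counted once. *)
definition cos_weight :: "nat \<Rightarrow> real" where
  "cos_weight k = (if k = 0 then 1 else 2)"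

definition lorentz_coeff :: "nat \<Rightarrow> real \<Rightarrow> nat \<Rightarrow> real \<Rightarrow> real" where
  "lorentz_coeff p x k a = cos_weight k * pi * cos (2 * pi * real k * x) * lorentz_ft p (2 * pi * real k) a"

lemma lorentz_coeff_minus [simp]: "lorentz_coeff p (- x) k a = lorentz_coeff p x k a"
  by (simp add: lorentz_coeff_def)

lemma abs_lorentz_coeff_le:
  assumes "0 < d"
  obtains K where "\<And>x k a. d \<le> a \<Longrightarrow> \<bar>lorentz_coeff p x k a\<bar> \<le> K * exp (- (pi * d)) ^ k / a ^ (2 * p + 1)"
proof -
  obtain K where K: "\<And>c a. 0 \<le> c \<Longrightarrow> d \<le> a \<Longrightarrow> \<bar>lorentz_ft p c a\<bar> \<le> K * exp (- (c * d) / 2) / a ^ (2 * p + 1)"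
    using abs_lorentz_ft_le[OF assms] by blast
  show ?thesis
  proof (rule that)
    fix x a :: real and k :: nat
    assume a: "d \<le> a"
    have "\<bar>cos_weight k * pi * cos (2 * pi * real k * x)\<bar> \<le> 2 * pi * 1"
      unfolding abs_mult by (intro mult_mono) (auto simp: cos_weight_def)
    moreover have ft: "\<bar>lorentz_ft p (2 * pi * real k) a\<bar> \<le> K * exp (- (pi * d)) ^ k / a ^ (2 * p + 1)"
      using K[of "2 * pi * real k" a] a by (simp flip: exp_of_nat_mult add: algebra_simps)
    ultimately have "\<bar>cos_weight k * pi * cos (2 * pi * real k * x)\<bar> * \<bar>lorentz_ft p (2 * pi * real k) a\<bar>
        \<le> 2 * pi * (K * exp (- (pi * d)) ^ k / a ^ (2 * p + 1))"
      using ft by (intro mult_mono) auto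
    then have "\<bar>lorentz_coeff p x k a\<bar> \<le> 2 * pi * (K * exp (- (pi * d)) ^ k / a ^ (2 * p + 1))"
      unfolding lorentz_coeff_def by (simp only: abs_mult[of "cos_weight k * pi * cos (2 * pi * real k * x)"])
    then show "\<bar>lorentz_coeff p x k a\<bar> \<le> 2 * pi * K * exp (- (pi * d)) ^ k / a ^ (2 * p + 1)"
      by simp
  qed
qed

lemma summable_lorentz_coeff:
  assumes "0 < a"
  shows "summable (\<lambda>k. lorentz_coeff p x k a)"
proof -
  obtain K where K: "\<And>x k b. a \<le> b \<Longrightarrow> \<bar>lorentz_coeff p x k b\<bar> \<le> K * exp (- (pi * a)) ^ k / b ^ (2 * p + 1)"
    using abs_lorentz_coeff_le[OF assms] by blast
  have "summable (\<lambda>k. K * exp (- (pi * a)) ^ k / a ^ (2 * p + 1))"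
    using assms by (intro summable_divide summable_mult summable_geometric) auto
  moreover have "norm (lorentz_coeff p x k a) \<le> K * exp (- (pi * a)) ^ k / a ^ (2 * p + 1)" for k
    using K[of a x k] by simp
  ultimately show ?thesis
    by (rule summable_comparison_test'[of _ 0])
qed

lemma abs_suminf_lorentz_coeff_le:
  assumes "0 < d"
  obtains B where "\<And>x a. d \<le> a \<Longrightarrow> \<bar>\<Sum>k. lorentz_coeff p x k a\<bar> \<le> B / a ^ (2 * p + 1)"
proof -
  obtain K where K: "\<And>x k a. d \<le> a \<Longrightarrow> \<bar>lorentz_coeff p x k a\<bar> \<le> K * exp (- (pi * d)) ^ k / a ^ (2 * p + 1)"
    using abs_lorentz_coeff_le[OF assms] by blast
  define \<rho> where "\<rho> = exp (- (pi * d))"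
  have \<rho>: "0 < \<rho>" "\<rho> < 1"
    using assms by (auto simp: \<rho>_def)
  show ?thesis
  proof (rule that)
    fix x a :: real
    assume a: "d \<le> a"
    have geom: "(\<lambda>k. K * \<rho> ^ k / a ^ (2 * p + 1)) sums (K * (1 / (1 - \<rho>)) / a ^ (2 * p + 1))"
      using \<rho> by (intro sums_divide sums_mult geometric_sums) auto
    have "summable (\<lambda>k. \<bar>lorentz_coeff p x k a\<bar>)"
      by (rule summable_comparison_test'[OF sums_summable[OF geom], of 0]) (use K[OF a] in \<open>simp add: \<rho>_def\<close>)
    then have "\<bar>\<Sum>k. lorentz_coeff p x k a\<bar> \<le> (\<Sum>k. \<bar>lorentz_coeff p x k a\<bar>)"
      using summable_norm[of "\<lambda>k. lorentz_coeff p x k a"] by simp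
    also have "\<dots> \<le> K * (1 / (1 - \<rho>)) / a ^ (2 * p + 1)"
      using K[OF a] geom \<open>summable (\<lambda>k. \<bar>lorentz_coeff p x k a\<bar>)\<close>
      by (intro sums_le[OF _ summable_sums geom]) (auto simp: \<rho>_def)
    finally show "\<bar>\<Sum>k. lorentz_coeff p x k a\<bar> \<le> K / (1 - \<rho>) / a ^ (2 * p + 1)"
      by simp
  qed
qed

(* The terms of index n and -n-1 of the sum over n in Z of ((x + n)^2 + a^2)^(-p). *)
definition lorentz_pair :: "nat \<Rightarrow> real \<Rightarrow> nat \<Rightarrow> real \<Rightarrow> real" where
  "lorentz_pair p x n a = 1 / ((x + real n)\<^sup>2 + a\<^sup>2) ^ p + 1 / ((x - real n - 1)\<^sup>2 + a\<^sup>2) ^ p"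

lemma lorentz_pair_pos: "0 < a \<Longrightarrow> 0 < lorentz_pair p x n a"
  unfolding lorentz_pair_def by (intro add_pos_pos divide_pos_pos zero_less_power add_nonneg_pos) auto

lemma lorentz_pair_has_derivative:
  assumes "0 < a"
  shows "(lorentz_pair p x n has_real_derivative - (2 * real p * a) * lorentz_pair (Suc p) x n a) (at a)"
proof -
  have inv_deriv: "((\<lambda>a. 1 / (X + a\<^sup>2) ^ p) has_real_derivative - (2 * real p * a) / (X + a\<^sup>2) ^ Suc p) (at a)"
    if "0 \<le> X" for X :: real
  proof -
    have "0 < X + a\<^sup>2"
      using that assms by (simp add: add_nonneg_pos)
    have "((\<lambda>a. inverse ((X + a\<^sup>2) ^ p)) has_real_derivative
        - (real p * (X + a\<^sup>2) ^ (p - 1) * (2 * a)) * inverse ((X + a\<^sup>2) ^ p) * inverse ((X + a\<^sup>2) ^ p)) (at a)"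
      using \<open>0 < X + a\<^sup>2\<close> by (auto intro!: derivative_eq_intros)
    moreover have "- (real p * Y ^ (p - 1) * (2 * a)) * inverse (Y ^ p) * inverse (Y ^ p)
        = - (2 * real p * a) / Y ^ Suc p" if "0 < Y" for Y :: real
      using that by (cases p) (simp_all add: field_simps)
    ultimately show ?thesis
      unfolding inverse_eq_divide[symmetric] using \<open>0 < X + a\<^sup>2\<close> by (metis DERIV_cong)
  qed
  have "lorentz_pair p x n = (\<lambda>a. 1 / ((x + real n)\<^sup>2 + a\<^sup>2) ^ p + 1 / ((x - real n - 1)\<^sup>2 + a\<^sup>2) ^ p)"
    by (simp add: fun_eq_iff lorentz_pair_def)
  with DERIV_add[OF inv_deriv[of "(x + real n)\<^sup>2"] inv_deriv[of "(x - real n - 1)\<^sup>2"]]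
  show ?thesis
    by (simp add: lorentz_pair_def distrib_left)
qed

lemma lorentz_pair_le:
  assumes "0 < d" "d \<le> a"
  shows "lorentz_pair (Suc p) x n a \<le> lorentz_pair 1 x n d / (d\<^sup>2) ^ p"
proof -
  have "1 / (X + a\<^sup>2) ^ Suc p \<le> 1 / (X + d\<^sup>2) / (d\<^sup>2) ^ p" if "0 \<le> X" for X :: real
  proof -
    have "d\<^sup>2 \<le> a\<^sup>2"
      using assms by (intro power_mono) auto
    then have "(X + d\<^sup>2) * (d\<^sup>2) ^ p \<le> (X + a\<^sup>2) * (X + a\<^sup>2) ^ p"
      using that by (intro mult_mono power_mono) auto
    moreover have "0 < (X + d\<^sup>2) * (d\<^sup>2) ^ p"
      using assms that by (intro mult_pos_pos add_nonneg_pos) auto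
    ultimately show ?thesis
      by (simp add: field_simps)
  qed
  then show ?thesis
    unfolding lorentz_pair_def by (simp add: add_divide_distrib add_mono)
qed

lemma pi_cot_eq_Digamma_diff:
  fixes z :: complex
  assumes z: "z \<notin> \<int>"
  shows "of_real pi * cot (of_real pi * z) = Digamma (1 - z) - Digamma z"
proof -
  have "z \<notin> \<int>\<^sub>\<le>\<^sub>0" "1 - z \<notin> \<int>\<^sub>\<le>\<^sub>0"
    using z nonpos_Ints_subset_Ints Ints_diff[of 1 "1 - z"] by auto
  then have "((\<lambda>z. Gamma z * Gamma (1 - z)) has_field_derivative
      Gamma z * Gamma (1 - z) * (Digamma z - Digamma (1 - z))) (at z)"
    by (auto intro!: derivative_eq_intros simp: algebra_simps)
  moreover have sin: "sin (of_real pi * z) \<noteq> 0"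
    using z by (auto simp: sin_eq_0 field_simps)
  then have "((\<lambda>z. of_real pi / sin (of_real pi * z)) has_field_derivative
      - (of_real pi / sin (of_real pi * z)) * (of_real pi * cot (of_real pi * z))) (at z)"
    by (auto intro!: derivative_eq_intros simp: cot_def power2_eq_square field_simps)
  moreover have "(\<lambda>z. Gamma z * Gamma (1 - z)) = (\<lambda>z::complex. of_real pi / sin (of_real pi * z))"
    using Gamma_reflection_complex by auto
  ultimately have "of_real pi / sin (of_real pi * z) * (Digamma z - Digamma (1 - z))
      = of_real pi / sin (of_real pi * z) * (- (of_real pi * cot (of_real pi * z)))"
    using DERIV_unique Gamma_reflection_complex[of z] by fastforce
  moreover have "of_real pi / sin (of_real pi * z) \<noteq> 0"
    using sin by simp
  ultimately have "Digamma z - Digamma (1 - z) = - (of_real pi * cot (of_real pi * z))"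
    by (rule mult_left_cancel[THEN iffD1, rotated])
  then show ?thesis
    by (simp add: algebra_simps)
qed

lemma pi_cot_sums:
  fixes w :: complex
  assumes "w \<notin> \<int>"
  shows "(\<lambda>k. inverse (w + of_nat k) - inverse (1 - w + of_nat k)) sums (of_real pi * cot (of_real pi * w))"
proof -
  have "w \<noteq> 0" "1 - w \<noteq> 0"
    using assms by auto
  then have "(\<lambda>k. inverse (of_nat (Suc k)) - inverse (v + of_nat k)) sums (Digamma v + euler_mascheroni)"
    if "v \<in> {w, 1 - w}" for v
    using summable_Digamma[of v] that by (auto simp: Digamma_def summable_sums)
  from sums_diff[OF this[of "1 - w"] this[of w]] show ?thesis
    by (simp add: pi_cot_eq_Digamma_diff[OF assms])
qed

lemma pi_cot_eq_geometric:
  fixes w :: complex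
  defines "q \<equiv> exp (2 * of_real pi * \<i> * w)"
  assumes "q \<noteq> 1"
  shows "of_real pi * cot (of_real pi * w) = - \<i> * of_real pi * (2 / (1 - q) - 1)"
proof -
  define E where "E = exp (\<i> * (of_real pi * w))"
  have E: "E \<noteq> 0" "q = E * E" "exp (- (\<i> * (of_real pi * w))) = inverse E"
    unfolding q_def E_def by (simp_all flip: exp_add add: algebra_simps exp_minus)
  have cos: "cos (of_real pi * w) = (q + 1) / (2 * E)"
    unfolding cos_exp_eq E(3) E_def[symmetric] E(2) using E(1) by (simp add: field_simps)
  have sin: "sin (of_real pi * w) = (q - 1) / (2 * \<i> * E)"
    unfolding sin_exp_eq E(3) E_def[symmetric] E(2) using E(1) by (simp add: field_simps)
  have "1 - q \<noteq> 0" "q - 1 \<noteq> 0"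
    using assms(2) by auto
  moreover have "cot (of_real pi * w) = \<i> * (q + 1) / (q - 1)"
    unfolding cot_def cos sin using E(1) \<open>q - 1 \<noteq> 0\<close> by (simp add: field_simps)
  ultimately show ?thesis
    by (simp add: field_simps)
qed

lemma lorentz_coeff_zero_sums:
  fixes x a :: real
  assumes a: "0 < a"
  defines "q \<equiv> exp (2 * of_real pi * \<i> * Complex x a)"
  shows "(\<lambda>k. lorentz_coeff 0 x k a) sums (pi / a * (2 * Re (1 / (1 - q)) - 1))"
proof -
  have q: "norm q < 1"
    using a by (simp add: q_def)
  have "Re (q ^ k) = exp (- (2 * pi * real k * a)) * cos (2 * pi * real k * x)" for k
  proof -
    have "q ^ k = exp (of_nat k * (2 * of_real pi * \<i> * Complex x a))"
      unfolding q_def by (simp add: exp_of_nat_mult)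
    also have "\<dots> = exp (Complex (- (2 * pi * real k * a)) (2 * pi * real k * x))"
      by (rule arg_cong[where f = exp]) (simp add: complex_eq_iff)
    finally show ?thesis
      by (simp add: Re_exp)
  qed
  then have "lorentz_coeff 0 x k a = pi / a * (2 * Re (q ^ k) - (if k = 0 then 1 else 0))" for k
    by (simp add: lorentz_coeff_def lorentz_ft_def cos_weight_def)
  moreover have "(\<lambda>k. pi / a * (2 * Re (q ^ k) - (if k = 0 then 1 else 0))) sums (pi / a * (2 * Re (1 / (1 - q)) - 1))"
    using geometric_sums[OF q] by (intro sums_mult sums_diff sums_single sums_mult[of _ _ 2] sums_Re) simp
  ultimately show ?thesis
    by simp
qed

lemma lorentz_pair_one_sums_geometric:
  fixes x a :: real
  assumes a: "0 < a"
  defines "q \<equiv> exp (2 * of_real pi * \<i> * Complex x a)"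
  shows "(\<lambda>n. lorentz_pair 1 x n a) sums (pi / a * (2 * Re (1 / (1 - q)) - 1))"
proof -
  define w where "w = Complex x a"
  have "w \<notin> \<int>"
    using a by (simp add: w_def complex_is_Int_iff)
  moreover have "q \<noteq> 1"
    using a by (auto simp: q_def dest: arg_cong[where f = norm])
  ultimately have "(\<lambda>k. inverse (w + of_nat k) - inverse (1 - w + of_nat k)) sums (- \<i> * of_real pi * (2 / (1 - q) - 1))"
    using pi_cot_sums[of w] pi_cot_eq_geometric[of w] unfolding q_def w_def by metis
  from sums_divide[OF sums_minus[OF sums_Im[OF this]], of a]
  have "(\<lambda>n. - Im (inverse (w + of_nat n) - inverse (1 - w + of_nat n)) / a) sums
      (pi * Re (2 * (1 / (1 - q)) - 1) / a)"
    by simp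
  also have "pi * Re (2 * (1 / (1 - q)) - 1) / a = pi / a * (2 * Re (1 / (1 - q)) - 1)"
    using Re_divide[of 2 "1 - q"] Re_divide[of 1 "1 - q"] by simp
  also have "(\<lambda>n. - Im (inverse (w + of_nat n) - inverse (1 - w + of_nat n)) / a) = (\<lambda>n. lorentz_pair 1 x n a)"
    using a by (simp add: fun_eq_iff w_def lorentz_pair_def Im_divide power2_eq_square field_simps)
  finally show ?thesis .
qed

lemma lorentz_pair_one_sums:
  assumes "0 < a"
  shows "(\<lambda>n. lorentz_pair 1 x n a) sums (\<Sum>k. lorentz_coeff 0 x k a)"
  using lorentz_pair_one_sums_geometric[OF assms] lorentz_coeff_zero_sums[OF assms]
  by (simp add: sums_iff)

lemma summable_lorentz_pair:
  assumes "0 < a"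
  shows "summable (\<lambda>n. lorentz_pair (Suc p) x n a)"
proof -
  have "summable (\<lambda>n. lorentz_pair 1 x n a / (a\<^sup>2) ^ p)"
    using lorentz_pair_one_sums[OF assms] by (intro summable_divide) (simp add: sums_iff)
  then show ?thesis
    by (rule summable_comparison_test'[of _ 0])
      (use assms lorentz_pair_le[of a a p x] lorentz_pair_pos[of a "Suc p" x] in \<open>simp add: less_imp_le\<close>)
qed

lemma lorentz_pair_suminf_has_derivative:
  assumes a0: "0 < a0"
  shows "((\<lambda>a. \<Sum>n. lorentz_pair (Suc p) x n a) has_real_derivative
    - (2 * real (Suc p) * a0) * (\<Sum>n. lorentz_pair (Suc (Suc p)) x n a0)) (at a0)"
proof -
  define c where "c a = - (2 * real (Suc p) * a)" for a
  have I: "0 < a" "a0/2 \<le> a" "\<bar>c a\<bar> \<le> 2 * real (Suc p) * (2 * a0)" if "a \<in> {a0/2<..<2*a0}" for a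
    using a0 that by (auto simp: c_def abs_mult)
  have deriv: "(lorentz_pair (Suc p) x n has_real_derivative c a * lorentz_pair (Suc (Suc p)) x n a) (at a)"
    if "a \<in> {a0/2<..<2*a0}" for n a
    unfolding c_def by (rule lorentz_pair_has_derivative[OF I(1)[OF that]])
  have bound: "\<bar>c a * lorentz_pair (Suc (Suc p)) x n a\<bar>
      \<le> 2 * real (Suc p) * (2 * a0) * (lorentz_pair 1 x n (a0/2) / ((a0/2)\<^sup>2) ^ Suc p)"
    if "a \<in> {a0/2<..<2*a0}" for n a
  proof -
    have "\<bar>lorentz_pair (Suc (Suc p)) x n a\<bar> \<le> lorentz_pair 1 x n (a0/2) / ((a0/2)\<^sup>2) ^ Suc p"
      using lorentz_pair_le[of "a0/2" a "Suc p" x n] lorentz_pair_pos[of a "Suc (Suc p)" x n] I[OF that] a0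
      by simp
    then show ?thesis
      unfolding abs_mult using I[OF that] a0 by (intro mult_mono) auto
  qed
  have "summable (\<lambda>n. 2 * real (Suc p) * (2 * a0) * (lorentz_pair 1 x n (a0/2) / ((a0/2)\<^sup>2) ^ Suc p))"
    using summable_lorentz_pair[of "a0/2" 0 x] a0 by (intro summable_mult summable_divide) simp_all
  note series = has_real_derivative_suminf[of "a0/2" "2*a0" "\<lambda>n. lorentz_pair (Suc p) x n"
      "\<lambda>n a. c a * lorentz_pair (Suc (Suc p)) x n a", OF deriv bound this _ summable_lorentz_pair[OF a0]]
  have "((\<lambda>a. \<Sum>n. lorentz_pair (Suc p) x n a) has_real_derivative
      (\<Sum>n. c a0 * lorentz_pair (Suc (Suc p)) x n a0)) (at a0)"
    by (rule series(3)) (use a0 in auto)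
  then show ?thesis
    unfolding suminf_mult[OF summable_lorentz_pair[OF a0]] by (simp only: c_def)
qed

lemma lorentz_coeff_suminf_has_derivative:
  assumes a0: "0 < a0"
  shows "((\<lambda>a. \<Sum>k. lorentz_coeff p x k a) has_real_derivative
    - (2 * real (Suc p) * a0) * (\<Sum>k. lorentz_coeff (Suc p) x k a0)) (at a0)"
proof -
  define c where "c a = - (2 * real (Suc p) * a)" for a
  have I: "0 < a" "a0/2 \<le> a" "\<bar>c a\<bar> \<le> 2 * real (Suc p) * (2 * a0)" if "a \<in> {a0/2<..<2*a0}" for a
    using a0 that by (auto simp: c_def abs_mult)
  obtain K where K: "\<And>x k a. a0/2 \<le> a \<Longrightarrow>
      \<bar>lorentz_coeff (Suc p) x k a\<bar> \<le> K * exp (- (pi * (a0/2))) ^ k / a ^ (2 * Suc p + 1)"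
    using abs_lorentz_coeff_le[of "a0/2" "Suc p"] a0 by auto
  have deriv: "((\<lambda>a. lorentz_coeff p x k a) has_real_derivative c a * lorentz_coeff (Suc p) x k a) (at a)"
    if "a \<in> {a0/2<..<2*a0}" for k a
    unfolding lorentz_coeff_def c_def
    by (rule DERIV_cong[OF DERIV_cmult[OF lorentz_ft_has_derivative[OF I(1)[OF that], of p "2 * pi * real k"]]])
      (simp add: ac_simps)
  have bound: "\<bar>c a * lorentz_coeff (Suc p) x k a\<bar>
      \<le> 2 * real (Suc p) * (2 * a0) * (\<bar>K\<bar> * exp (- (pi * (a0/2))) ^ k / (a0/2) ^ (2 * Suc p + 1))"
    if "a \<in> {a0/2<..<2*a0}" for k a
  proof -
    have "K * exp (- (pi * (a0/2))) ^ k / a ^ (2 * Suc p + 1)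
        \<le> \<bar>K\<bar> * exp (- (pi * (a0/2))) ^ k / (a0/2) ^ (2 * Suc p + 1)"
      using I[OF that] a0 by (intro frac_le mult_right_mono power_mono) auto
    with K[OF I(2)[OF that]]
    have "\<bar>lorentz_coeff (Suc p) x k a\<bar> \<le> \<bar>K\<bar> * exp (- (pi * (a0/2))) ^ k / (a0/2) ^ (2 * Suc p + 1)"
      by (rule order.trans)
    then show ?thesis
      unfolding abs_mult using I[OF that] a0 by (intro mult_mono) auto
  qed
  have "summable (\<lambda>k. 2 * real (Suc p) * (2 * a0) * (\<bar>K\<bar> * exp (- (pi * (a0/2))) ^ k / (a0/2) ^ (2 * Suc p + 1)))"
    using a0 by (intro summable_mult summable_divide summable_geometric) auto
  note series = has_real_derivative_suminf[of "a0/2" "2*a0" "\<lambda>k a. lorentz_coeff p x k a"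
      "\<lambda>k a. c a * lorentz_coeff (Suc p) x k a", OF deriv bound this _ summable_lorentz_coeff[OF a0]]
  have "((\<lambda>a. \<Sum>k. lorentz_coeff p x k a) has_real_derivative
      (\<Sum>k. c a0 * lorentz_coeff (Suc p) x k a0)) (at a0)"
    by (rule series(3)) (use a0 in auto)
  then show ?thesis
    unfolding suminf_mult[OF summable_lorentz_coeff[OF a0]] by (simp only: c_def)
qed

lemma lorentz_pair_sums_Suc:
  assumes IH: "\<And>a. 0 < a \<Longrightarrow> (\<lambda>n. lorentz_pair (Suc p) x n a) sums (\<Sum>k. lorentz_coeff p x k a)"
    and a0: "0 < a0"
  shows "(\<lambda>n. lorentz_pair (Suc (Suc p)) x n a0) sums (\<Sum>k. lorentz_coeff (Suc p) x k a0)"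
proof -
  have "((\<lambda>a. \<Sum>k. lorentz_coeff p x k a) has_real_derivative
      - (2 * real (Suc p) * a0) * (\<Sum>n. lorentz_pair (Suc (Suc p)) x n a0)) (at a0)"
  proof (rule has_field_derivative_transform_within_open[OF lorentz_pair_suminf_has_derivative[OF a0]
        open_greaterThan[of 0]])
    show "(\<Sum>n. lorentz_pair (Suc p) x n a) = (\<Sum>k. lorentz_coeff p x k a)" if "a \<in> {0<..}" for a
      using IH[of a] that by (simp add: sums_iff)
  qed (use a0 in simp)
  from DERIV_unique[OF this lorentz_coeff_suminf_has_derivative[OF a0]] a0
  have "(\<Sum>n. lorentz_pair (Suc (Suc p)) x n a0) = (\<Sum>k. lorentz_coeff (Suc p) x k a0)"
    by simp
  with summable_lorentz_pair[OF a0] show ?thesis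
    by (simp add: sums_iff)
qed

theorem lorentz_pair_sums:
  assumes "0 < a"
  shows "(\<lambda>n. lorentz_pair (Suc p) x n a) sums (\<Sum>k. lorentz_coeff p x k a)"
  using assms
proof (induction p arbitrary: a)
  case 0
  then show ?case
    using lorentz_pair_one_sums by simp
next
  case (Suc p)
  then show ?case
    by (rule lorentz_pair_sums_Suc)
qed

section \<open>The Epstein zeta function at \<open>s = 3\<close> as a double Fourier series\<close>

definition zeta_freq :: "nat \<Rightarrow> nat \<Rightarrow> real" where
  "zeta_freq k j = 2 * pi * real j * real (Suc k)"

definition zeta_amp :: "nat \<Rightarrow> nat \<Rightarrow> real" where
  "zeta_amp k j = cos_weight j * pi / (4 * real (Suc k) ^ 5)"

(* The term (m, j) = (k + 1, j) of the double series: the j-th Fourier mode of the rows m and -m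
   of the lattice sum. *)
definition zeta_term :: "nat \<Rightarrow> nat \<Rightarrow> real \<Rightarrow> real \<Rightarrow> real" where
  "zeta_term k j x y = zeta_amp k j * cos (zeta_freq k j * x) *
     (exp (- (zeta_freq k j * y)) * ((zeta_freq k j)\<^sup>2 + 3 * zeta_freq k j / y + 3 / y\<^sup>2))"

lemma zeta_term_eq_lorentz_coeff:
  assumes "0 < y"
  shows "zeta_term k j x y = 2 * y ^ 3 * lorentz_coeff 2 (real (Suc k) * x) j (real (Suc k) * y)"
proof -
  have rb: "rev_bessel 2 s = s\<^sup>2 + 3 * s + 3" for s
    by (simp add: numeral_2_eq_2)
  define m where "m = real (Suc k)"
  have freq: "2 * pi * real j * (m * z) = zeta_freq k j * z" for z
    by (simp add: zeta_freq_def m_def)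
  have "0 < m"
    by (simp add: m_def)
  then show ?thesis
    using assms unfolding zeta_term_def zeta_amp_def lorentz_coeff_def lorentz_ft_def rb m_def[symmetric]
    unfolding freq by (simp add: field_simps eval_nat_numeral)
qed

lemma summable_zeta_term: "0 < y \<Longrightarrow> summable (\<lambda>j. zeta_term k j x y)"
  by (simp add: zeta_term_eq_lorentz_coeff summable_lorentz_coeff)

lemma summable_zeta_row_sums:
  assumes y: "0 < y"
  shows "summable (\<lambda>k. \<Sum>j. zeta_term k j x y)"
proof -
  obtain B where B: "\<And>x a. y \<le> a \<Longrightarrow> \<bar>\<Sum>j. lorentz_coeff 2 x j a\<bar> \<le> B / a ^ 5"
    using abs_suminf_lorentz_coeff_le[OF y, of 2] by auto
  have bound: "\<bar>\<Sum>j. zeta_term k j x y\<bar> \<le> 2 * B / y\<^sup>2 * inverse (real (Suc k) ^ 5)" for k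
  proof -
    define m where "m = real (Suc k)"
    have m: "1 \<le> m"
      by (simp add: m_def)
    have "(\<lambda>j. zeta_term k j x y) = (\<lambda>j. 2 * y ^ 3 * lorentz_coeff 2 (m * x) j (m * y))"
      using y by (simp add: fun_eq_iff zeta_term_eq_lorentz_coeff m_def)
    then have "(\<Sum>j. zeta_term k j x y) = 2 * y ^ 3 * (\<Sum>j. lorentz_coeff 2 (m * x) j (m * y))"
      using suminf_mult[OF summable_lorentz_coeff, of "m * y"] y m by simp
    then have "\<bar>\<Sum>j. zeta_term k j x y\<bar> \<le> 2 * y ^ 3 * (B / (m * y) ^ 5)"
      using mult_left_mono[OF B[of "m * y" "m * x"], of "2 * y ^ 3"] y m by (simp add: abs_mult)
    also have "\<dots> = 2 * B / y\<^sup>2 * inverse (m ^ 5)"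
      using y m by (simp add: field_simps eval_nat_numeral)
    finally show ?thesis
      by (simp add: m_def)
  qed
  have "summable (\<lambda>k. inverse (real (Suc k) ^ 5))"
    by (subst summable_Suc_iff[of "\<lambda>n. inverse (real n ^ 5)"]) (rule inverse_power_summable, simp)
  then have "summable (\<lambda>k. 2 * B / y\<^sup>2 * inverse (real (Suc k) ^ 5))"
    by (rule summable_mult)
  then show ?thesis
    by (rule summable_comparison_test'[of _ 0]) (simp only: real_norm_def bound)
qed

lemma suminf_zeta_term_row:
  assumes y: "0 < y" and m: "m \<noteq> 0"
  shows "(\<Sum>j. zeta_term (nat \<bar>m\<bar> - 1) j x y) = 2 * y ^ 3 * (\<Sum>j. lorentz_coeff 2 (of_int m * x) j (\<bar>of_int m\<bar> * y))"
proof -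
  have "real (Suc (nat \<bar>m\<bar> - 1)) = \<bar>real_of_int m\<bar>"
    using m by simp
  moreover have "lorentz_coeff 2 (of_int m * x) j a = lorentz_coeff 2 (\<bar>real_of_int m\<bar> * x) j a" for j a
  proof (cases "0 \<le> m")
    case False
    then have "of_int m * x = - (\<bar>real_of_int m\<bar> * x)"
      by simp
    then show ?thesis
      by (simp only: lorentz_coeff_minus)
  qed simp
  ultimately have "(\<lambda>j. zeta_term (nat \<bar>m\<bar> - 1) j x y)
      = (\<lambda>j. 2 * y ^ 3 * lorentz_coeff 2 (of_int m * x) j (\<bar>of_int m\<bar> * y))"
    using y by (simp add: fun_eq_iff zeta_term_eq_lorentz_coeff)
  moreover have "0 < \<bar>real_of_int m\<bar> * y"
    using y m by simp
  note suminf_mult[OF summable_lorentz_coeff[OF this, of 2 "of_int m * x"], of "2 * y ^ 3"]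
  ultimately show ?thesis
    by simp
qed

lemma has_sum_epstein_row:
  assumes y: "0 < y" and m: "m \<noteq> 0"
  shows "((\<lambda>n::int. y ^ 3 / ((of_int m * x + of_int n)\<^sup>2 + (of_int m * y)\<^sup>2) ^ 3) has_sum
      (\<Sum>j. zeta_term (nat \<bar>m\<bar> - 1) j x y) / 2) UNIV"
proof -
  define f where "f n = y ^ 3 / ((of_int m * x + of_int n)\<^sup>2 + (of_int m * y)\<^sup>2) ^ 3" for n :: int
  define a where "a = \<bar>real_of_int m\<bar> * y"
  have a: "0 < a"
    using y m by (simp add: a_def)
  have pair: "f (int n) + f (- int n - 1) = y ^ 3 * lorentz_pair 3 (of_int m * x) n a" for n
  proof -
    have "(of_int m * y)\<^sup>2 = a\<^sup>2"
      by (simp add: a_def power_mult_distrib)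
    moreover have "real_of_int m * x + real_of_int (- int n - 1) = real_of_int m * x - real n - 1"
      by simp
    ultimately show ?thesis
      unfolding f_def lorentz_pair_def by (simp only: add_divide_distrib distrib_left of_int_of_nat_eq times_divide_eq_right mult_1_right)
  qed
  have sum: "y ^ 3 * (\<Sum>j. lorentz_coeff 2 (of_int m * x) j a) = (\<Sum>j. zeta_term (nat \<bar>m\<bar> - 1) j x y) / 2"
    using suminf_zeta_term_row[OF y m, of x] by (simp add: a_def)
  have "(\<lambda>n. f (int n) + f (- int n - 1)) sums ((\<Sum>j. zeta_term (nat \<bar>m\<bar> - 1) j x y) / 2)"
    unfolding pair sum[symmetric] using lorentz_pair_sums[OF a, of 2]
    by (intro sums_mult) (simp add: numeral_3_eq_3)
  then have "(f has_sum (\<Sum>j. zeta_term (nat \<bar>m\<bar> - 1) j x y) / 2) UNIV"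
    by (rule has_sum_int_nonneg_pairs[rotated]) (use y in \<open>simp add: f_def\<close>)
  then show ?thesis
    by (simp add: f_def[abs_def])
qed

lemma epstein_zeta_3_Complex:
  assumes y: "0 < y"
  shows "epstein_zeta 3 (Complex x y) =
    infsum (\<lambda>(m, n). y ^ 3 / ((of_int m * x + of_int n)\<^sup>2 + (of_int m * y)\<^sup>2) ^ 3) (UNIV - {(0, 0)})"
proof -
  have "Im (Complex x y) powr 3 / cmod (of_int m * Complex x y + of_int n) powr (2 * 3)
      = y ^ 3 / ((of_int m * x + of_int n)\<^sup>2 + (of_int m * y)\<^sup>2) ^ 3" if "(m, n) \<noteq> (0, 0)" for m n
  proof -
    define w where "w = of_int m * Complex x y + of_int n"
    have w: "(cmod w)\<^sup>2 = (of_int m * x + of_int n)\<^sup>2 + (of_int m * y)\<^sup>2"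
      by (simp add: w_def cmod_power2)
    moreover have "0 < (of_int m * x + of_int n)\<^sup>2 + (of_int m * y)\<^sup>2"
      using that y by (cases "m = 0") (auto intro: add_nonneg_pos)
    ultimately have "0 < cmod w"
      by (metis norm_ge_zero order_less_le power_zero_numeral)
    then have "cmod w powr (2 * 3) = ((cmod w)\<^sup>2) ^ 3"
      by (simp add: powr_realpow flip: power_mult)
    then show ?thesis
      using y by (simp add: w_def[symmetric] w powr_realpow)
  qed
  then show ?thesis
    unfolding epstein_zeta_def by (intro infsum_cong) force
qed

theorem epstein_zeta_3_eq:
  assumes y: "0 < y"
  shows "epstein_zeta 3 (Complex x y) = y ^ 3 * infsum (\<lambda>n::int. 1 / real_of_int n ^ 6) (- {0})
    + (\<Sum>k. \<Sum>j. zeta_term k j x y)"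
proof -
  define c0 where "c0 = infsum (\<lambda>n::int. 1 / real_of_int n ^ 6) (- {0})"
  define S where "S k = (\<Sum>j. zeta_term k j x y)" for k
  define g :: "int \<times> int \<Rightarrow> real"
    where "g = (\<lambda>(m, n). y ^ 3 / ((of_int m * x + of_int n)\<^sup>2 + (of_int m * y)\<^sup>2) ^ 3)"
  define B :: "int \<Rightarrow> int set" where "B m = (if m = 0 then - {0} else UNIV)" for m
  define R :: "int \<Rightarrow> real" where "R m = (if m = 0 then y ^ 3 * c0 else S (nat \<bar>m\<bar> - 1) / 2)" for m
  have g_nonneg: "0 \<le> g p" for p
    using y by (auto simp: g_def split: prod.split)
  have "UNIV - {(0, 0)} = Sigma UNIV B"
    by (auto simp: B_def split: if_splits)
  then have zeta: "epstein_zeta 3 (Complex x y) = infsum g (Sigma UNIV B)"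
    using epstein_zeta_3_Complex[OF y, of x] by (simp add: g_def)
  have rows: "((\<lambda>n. g (m, n)) has_sum R m) (B m)" for m
  proof (cases "m = 0")
    case True
    have "(\<lambda>n::int. 1 / real_of_int n ^ 6) summable_on - {0}"
      using summable_on_inverse_int_power[of 6] by simp
    then have "((\<lambda>n::int. y ^ 3 * (1 / real_of_int n ^ 6)) has_sum y ^ 3 * c0) (- {0})"
      unfolding c0_def by (intro has_sum_cmult_right has_sum_infsum)
    then show ?thesis
      using True by (simp add: g_def B_def R_def flip: power_mult)
  next
    case False
    then show ?thesis
      using has_sum_epstein_row[OF y False, of x] by (simp add: g_def B_def R_def S_def)
  qed
  have R_nonneg: "0 \<le> R m" for m
    using rows[of m] g_nonneg by (rule has_sum_nonneg)
  have S: "(\<lambda>k. S k / 2) sums ((\<Sum>k. S k) / 2)"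
    using summable_zeta_row_sums[OF y, of x] unfolding S_def[abs_def] by (intro sums_divide summable_sums)
  then have "(\<lambda>n. R (int (Suc n))) sums ((\<Sum>k. S k) / 2)"
    by (simp add: R_def nat_add_distrib)
  then have "(\<lambda>n. R (int n)) sums (y ^ 3 * c0 + (\<Sum>k. S k) / 2)"
    using sums_Suc_iff[where f = "\<lambda>n. R (int n)"] by (simp add: R_def add.commute)
  moreover have "(\<lambda>n. R (- int n - 1)) sums ((\<Sum>k. S k) / 2)"
    using S by (simp add: R_def nat_add_distrib)
  ultimately have "(R has_sum (y ^ 3 * c0 + (\<Sum>k. S k) / 2 + (\<Sum>k. S k) / 2)) UNIV"
    by (rule has_sum_int_nonneg_halves[of R, OF R_nonneg])
  then have "(R has_sum (y ^ 3 * c0 + (\<Sum>k. S k))) UNIV"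
    by (simp add: add.commute)
  moreover from this have "g summable_on Sigma UNIV B"
    using rows g_nonneg by (intro summable_on_SigmaI[where g = R]) (auto simp: has_sum_iff)
  ultimately have "(g has_sum (y ^ 3 * c0 + (\<Sum>k. S k))) (Sigma UNIV B)"
    using rows by (intro has_sum_SigmaI[where g = R]) auto
  then show ?thesis
    by (simp add: zeta c0_def S_def infsumI)
qed

section \<open>Termwise differentiation\<close>

definition zeta_term_dx :: "nat \<Rightarrow> nat \<Rightarrow> real \<Rightarrow> real \<Rightarrow> real" where
  "zeta_term_dx k j x y = - zeta_amp k j * zeta_freq k j * sin (zeta_freq k j * x) *
     (exp (- (zeta_freq k j * y)) * ((zeta_freq k j)\<^sup>2 + 3 * zeta_freq k j / y + 3 / y\<^sup>2))"

definition zeta_term_dxdy :: "nat \<Rightarrow> nat \<Rightarrow> real \<Rightarrow> real \<Rightarrow> real" where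
  "zeta_term_dxdy k j x y = zeta_amp k j * zeta_freq k j * sin (zeta_freq k j * x) *
     (exp (- (zeta_freq k j * y)) *
      ((zeta_freq k j) ^ 3 + 3 * (zeta_freq k j)\<^sup>2 / y + 6 * zeta_freq k j / y\<^sup>2 + 6 / y ^ 3))"

lemma zeta_term_has_derivative_x:
  "((\<lambda>x. zeta_term k j x y) has_real_derivative zeta_term_dx k j x y) (at x)"
proof -
  define C where "C = zeta_freq k j"
  define E where "E = exp (- (C * y)) * (C\<^sup>2 + 3 * C / y + 3 / y\<^sup>2)"
  have "((\<lambda>x. cos (C * x)) has_real_derivative - sin (C * x) * C) (at x)"
    by (auto intro!: derivative_eq_intros)
  from DERIV_cmult_right[OF DERIV_cmult[OF this, of "zeta_amp k j"], of E]
  show ?thesis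
    unfolding zeta_term_def zeta_term_dx_def C_def[symmetric] E_def[symmetric] by (simp add: algebra_simps)
qed

lemma zeta_term_dx_has_derivative_y:
  assumes "0 < y"
  shows "((\<lambda>y. zeta_term_dx k j x y) has_real_derivative zeta_term_dxdy k j x y) (at y)"
proof -
  define C where "C = zeta_freq k j"
  have "((\<lambda>y. exp (- (C * y)) * (C\<^sup>2 + 3 * C / y + 3 / y\<^sup>2)) has_real_derivative
      - (exp (- (C * y)) * (C ^ 3 + 3 * C\<^sup>2 / y + 6 * C / y\<^sup>2 + 6 / y ^ 3))) (at y)"
    using assms by (auto intro!: derivative_eq_intros simp: field_simps eval_nat_numeral)
  from DERIV_cmult[OF this, of "- zeta_amp k j * C * sin (C * x)"]
  show ?thesis
    unfolding zeta_term_dx_def zeta_term_dxdy_def C_def[symmetric] by (simp add: algebra_simps)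
qed

lemma zeta_amp_bounds: "0 \<le> zeta_amp k j" "zeta_amp k j \<le> pi / 2"
proof -
  have "cos_weight j * pi / (4 * real (Suc k) ^ 5) \<le> 2 * pi / (4 * 1)"
    by (intro frac_le mult_right_mono) (auto simp: cos_weight_def)
  then show "0 \<le> zeta_amp k j" "zeta_amp k j \<le> pi / 2"
    by (auto simp: zeta_amp_def cos_weight_def)
qed

lemma zeta_freq_decay:
  fixes n :: nat
  obtains K where "\<And>k j. zeta_freq k j * (1 + zeta_freq k j) ^ n * exp (- (zeta_freq k j / 2))
    \<le> K * (exp (- (pi / 4)) ^ j * exp (- (pi / 4)) ^ k)"
proof -
  obtain K where K: "\<And>s::real. 0 \<le> s \<Longrightarrow> (1 + s) ^ Suc n * exp (- (1/2 * s)) \<le> K * exp (- (1/2 * s) / 2)"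
    using power_mult_exp_neg_le_exp_half[of "1/2" "Suc n"] by auto
  have K0: "0 \<le> K"
    using K[of 0] by simp
  show ?thesis
  proof (rule that)
    fix k j :: nat
    define C where "C = zeta_freq k j"
    show "C * (1 + C) ^ n * exp (- (C / 2)) \<le> K * (exp (- (pi / 4)) ^ j * exp (- (pi / 4)) ^ k)"
    proof (cases "j = 0")
      case False
      have "0 \<le> C"
        by (simp add: C_def zeta_freq_def)
      then have "C * (1 + C) ^ n \<le> (1 + C) ^ Suc n"
        by (simp add: mult_right_mono)
      then have "C * (1 + C) ^ n * exp (- (C / 2)) \<le> (1 + C) ^ Suc n * exp (- (1/2 * C))"
        by (simp add: mult_right_mono)
      also have "\<dots> \<le> K * exp (- (C / 4))"
        using K[of C] by (simp add: C_def zeta_freq_def)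
      also have "exp (- (C / 4)) \<le> exp (- (pi / 4)) ^ j * exp (- (pi / 4)) ^ k"
      proof -
        have "1 * real k \<le> real j * real k"
          using False by (intro mult_right_mono) auto
        then have "real j + real k \<le> 2 * (real j * real (Suc k))"
          by (simp add: algebra_simps)
        then have "pi / 4 * (real j + real k) \<le> pi / 4 * (2 * (real j * real (Suc k)))"
          by (rule mult_left_mono) simp
        then have "pi / 4 * (real j + real k) \<le> C / 4"
          by (simp add: C_def zeta_freq_def)
        then show ?thesis
          by (simp flip: exp_of_nat_mult exp_add add: algebra_simps)
      qed
      finally show ?thesis
        using K0 by (simp add: mult_left_mono)
    qed (use K0 in \<open>simp add: C_def zeta_freq_def\<close>)
  qed
qed

lemma quadratic_profile_le:
  fixes C y :: real
  assumes C: "0 \<le> C" and y: "1/2 < y"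
  shows "C\<^sup>2 + 3 * C / y + 3 / y\<^sup>2 \<le> 12 * (1 + C)\<^sup>2"
proof -
  define u where "u = 1 / y"
  have u: "0 \<le> u" "u \<le> 2"
    using y by (auto simp: u_def field_simps)
  then have "3 * C * u \<le> 3 * C * 2" "u\<^sup>2 \<le> 2\<^sup>2"
    using C by (intro mult_left_mono power_mono; simp)+
  then have "3 * C * u \<le> 6 * C" "u\<^sup>2 \<le> 4"
    by simp_all
  moreover have "(1 + C)\<^sup>2 = 1 + 2 * C + C\<^sup>2"
    by (simp add: power2_eq_square algebra_simps)
  moreover have "C\<^sup>2 + 3 * C / y + 3 / y\<^sup>2 = C\<^sup>2 + 3 * C * u + 3 * u\<^sup>2"
    by (simp add: u_def power_divide)
  ultimately show ?thesis
    using C zero_le_power2[of C] by linarith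
qed

lemma cubic_profile_le:
  fixes C y :: real
  assumes C: "0 \<le> C" and y: "1/2 < y"
  shows "C ^ 3 + 3 * C\<^sup>2 / y + 6 * C / y\<^sup>2 + 6 / y ^ 3 \<le> 48 * (1 + C) ^ 3"
proof -
  define u where "u = 1 / y"
  have u: "0 \<le> u" "u \<le> 2"
    using y by (auto simp: u_def field_simps)
  then have "3 * C\<^sup>2 * u \<le> 3 * C\<^sup>2 * 2" "6 * C * u\<^sup>2 \<le> 6 * C * 2\<^sup>2" "u ^ 3 \<le> 2 ^ 3"
    using C by (intro mult_left_mono power_mono; simp)+
  then have "3 * C\<^sup>2 * u \<le> 6 * C\<^sup>2" "6 * C * u\<^sup>2 \<le> 24 * C" "u ^ 3 \<le> 8"
    by simp_all
  moreover have "(1 + C) ^ 3 = 1 + 3 * C + 3 * C\<^sup>2 + C ^ 3"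
    by (simp add: power2_eq_square power3_eq_cube algebra_simps)
  moreover have "C ^ 3 + 3 * C\<^sup>2 / y + 6 * C / y\<^sup>2 + 6 / y ^ 3 = C ^ 3 + 3 * C\<^sup>2 * u + 6 * C * u\<^sup>2 + 6 * u ^ 3"
    by (simp add: u_def power_divide)
  ultimately show ?thesis
    using C zero_le_power2[of C] zero_le_power[OF C, of 3] by linarith
qed

lemma abs_zeta_term_dx_le:
  obtains K where "\<And>k j x y. 1/2 < y \<Longrightarrow>
    \<bar>zeta_term_dx k j x y\<bar> \<le> K * (exp (- (pi / 4)) ^ j * exp (- (pi / 4)) ^ k)"
proof -
  obtain K where K: "\<And>k j. zeta_freq k j * (1 + zeta_freq k j) ^ 2 * exp (- (zeta_freq k j / 2))
      \<le> K * (exp (- (pi / 4)) ^ j * exp (- (pi / 4)) ^ k)"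
    using zeta_freq_decay[of 2] by blast
  show ?thesis
  proof (rule that)
    fix k j :: nat and x y :: real
    assume y: "1/2 < y"
    define C where "C = zeta_freq k j"
    have C: "0 \<le> C"
      by (simp add: C_def zeta_freq_def)
    note P = quadratic_profile_le[OF C y]
    have "C * (1 / 2) \<le> C * y"
      using C y by (intro mult_left_mono) auto
    then have "exp (- (C * y)) \<le> exp (- (C / 2))"
      by simp
    then have "\<bar>zeta_term_dx k j x y\<bar> \<le> pi / 2 * C * 1 * (exp (- (C / 2)) * (12 * (1 + C)\<^sup>2))"
      unfolding zeta_term_dx_def C_def[symmetric] abs_mult abs_minus_cancel
      using zeta_amp_bounds[of k j] C P y
      by (intro mult_mono) (auto simp: add_nonneg_nonneg)
    also have "\<dots> = 6 * pi * (C * (1 + C) ^ 2 * exp (- (C / 2)))"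
      by simp
    also have "\<dots> \<le> 6 * pi * (K * (exp (- (pi / 4)) ^ j * exp (- (pi / 4)) ^ k))"
      using K[of k j] by (simp add: C_def)
    finally show "\<bar>zeta_term_dx k j x y\<bar> \<le> 6 * pi * K * (exp (- (pi / 4)) ^ j * exp (- (pi / 4)) ^ k)"
      by simp
  qed
qed

lemma abs_zeta_term_dxdy_le:
  obtains K where "\<And>k j x y. 1/2 < y \<Longrightarrow>
    \<bar>zeta_term_dxdy k j x y\<bar> \<le> K * (exp (- (pi / 4)) ^ j * exp (- (pi / 4)) ^ k)"
proof -
  obtain K where K: "\<And>k j. zeta_freq k j * (1 + zeta_freq k j) ^ 3 * exp (- (zeta_freq k j / 2))
      \<le> K * (exp (- (pi / 4)) ^ j * exp (- (pi / 4)) ^ k)"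
    using zeta_freq_decay[of 3] by blast
  show ?thesis
  proof (rule that)
    fix k j :: nat and x y :: real
    assume y: "1/2 < y"
    define C where "C = zeta_freq k j"
    have C: "0 \<le> C"
      by (simp add: C_def zeta_freq_def)
    note P = cubic_profile_le[OF C y]
    have "C * (1 / 2) \<le> C * y"
      using C y by (intro mult_left_mono) auto
    then have "exp (- (C * y)) \<le> exp (- (C / 2))"
      by simp
    then have "\<bar>zeta_term_dxdy k j x y\<bar> \<le> pi / 2 * C * 1 * (exp (- (C / 2)) * (48 * (1 + C) ^ 3))"
      unfolding zeta_term_dxdy_def C_def[symmetric] abs_mult
      using zeta_amp_bounds[of k j] C P y
      by (intro mult_mono) (auto simp: add_nonneg_nonneg)
    also have "\<dots> = 24 * pi * (C * (1 + C) ^ 3 * exp (- (C / 2)))"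
      by simp
    also have "\<dots> \<le> 24 * pi * (K * (exp (- (pi / 4)) ^ j * exp (- (pi / 4)) ^ k))"
      using K[of k j] by (simp add: C_def)
    finally show "\<bar>zeta_term_dxdy k j x y\<bar> \<le> 24 * pi * K * (exp (- (pi / 4)) ^ j * exp (- (pi / 4)) ^ k)"
      by simp
  qed
qed

lemma epstein_zeta_3_has_derivative_x:
  assumes y: "1/2 < y"
  shows "((\<lambda>x. epstein_zeta 3 (Complex x y)) has_real_derivative (\<Sum>k. \<Sum>j. zeta_term_dx k j x y)) (at x)"
    and "summable (\<lambda>j. zeta_term_dx k j x y)" and "summable (\<lambda>k. \<Sum>j. zeta_term_dx k j x y)"
proof -
  obtain K where K: "\<And>k j x. \<bar>zeta_term_dx k j x y\<bar> \<le> K * (exp (- (pi / 4)) ^ j * exp (- (pi / 4)) ^ k)"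
    using abs_zeta_term_dx_le y by metis
  have "0 < y"
    using y by simp
  note series = has_real_derivative_suminf_suminf[of "x - 1" "x + 1" "\<lambda>k j x. zeta_term k j x y"
      "\<lambda>k j x. zeta_term_dx k j x y" "\<lambda>k j. K * (exp (- (pi / 4)) ^ j * exp (- (pi / 4)) ^ k)" x x,
      OF zeta_term_has_derivative_x K summable_double_geometric _ summable_zeta_term[OF \<open>0 < y\<close>]
      summable_zeta_row_sums[OF \<open>0 < y\<close>]]
  show "summable (\<lambda>j. zeta_term_dx k j x y)"
    by (rule series(1)) auto
  show "summable (\<lambda>k. \<Sum>j. zeta_term_dx k j x y)"
    by (rule series(2)) auto
  have sum_deriv: "((\<lambda>x. \<Sum>k. \<Sum>j. zeta_term k j x y) has_real_derivative (\<Sum>k. \<Sum>j. zeta_term_dx k j x y)) (at x)"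
    by (rule series(3)) auto
  show "((\<lambda>x. epstein_zeta 3 (Complex x y)) has_real_derivative (\<Sum>k. \<Sum>j. zeta_term_dx k j x y)) (at x)"
    unfolding epstein_zeta_3_eq[OF \<open>0 < y\<close>] using DERIV_add[OF DERIV_const sum_deriv] by simp
qed

lemma deriv_deriv_epstein_zeta_3:
  assumes y: "1/2 < y"
  shows "deriv (\<lambda>t. deriv (\<lambda>u. epstein_zeta 3 (Complex u t)) x) y = (\<Sum>k. \<Sum>j. zeta_term_dxdy k j x y)"
    and "summable (\<lambda>j. zeta_term_dxdy k j x y)" and "summable (\<lambda>k. \<Sum>j. zeta_term_dxdy k j x y)"
proof -
  obtain K where K: "\<And>k j x t. 1/2 < t \<Longrightarrow>
      \<bar>zeta_term_dxdy k j x t\<bar> \<le> K * (exp (- (pi / 4)) ^ j * exp (- (pi / 4)) ^ k)"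
    using abs_zeta_term_dxdy_le by metis
  note series = has_real_derivative_suminf_suminf[of "1/2" "y + 1" "\<lambda>k j t. zeta_term_dx k j x t"
      "\<lambda>k j t. zeta_term_dxdy k j x t" "\<lambda>k j. K * (exp (- (pi / 4)) ^ j * exp (- (pi / 4)) ^ k)" y y,
      OF zeta_term_dx_has_derivative_y K summable_double_geometric _
      epstein_zeta_3_has_derivative_x(2,3)[OF y]]
  show "summable (\<lambda>j. zeta_term_dxdy k j x y)"
    by (rule series(1)) (use y in auto)
  show "summable (\<lambda>k. \<Sum>j. zeta_term_dxdy k j x y)"
    by (rule series(2)) (use y in auto)
  have "((\<lambda>t. \<Sum>k. \<Sum>j. zeta_term_dx k j x t) has_real_derivative (\<Sum>k. \<Sum>j. zeta_term_dxdy k j x y)) (at y)"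
    by (rule series(3)) (use y in auto)
  then have "((\<lambda>t. deriv (\<lambda>u. epstein_zeta 3 (Complex u t)) x) has_real_derivative
      (\<Sum>k. \<Sum>j. zeta_term_dxdy k j x y)) (at y)"
  proof (rule has_field_derivative_transform_within_open[OF _ open_greaterThan[of "1/2"]])
    show "(\<Sum>k. \<Sum>j. zeta_term_dx k j x t) = deriv (\<lambda>u. epstein_zeta 3 (Complex u t)) x"
      if "t \<in> {1/2<..}" for t
      using that by (intro DERIV_imp_deriv[symmetric] epstein_zeta_3_has_derivative_x) auto
  qed (use y in auto)
  then show "deriv (\<lambda>t. deriv (\<lambda>u. epstein_zeta 3 (Complex u t)) x) y = (\<Sum>k. \<Sum>j. zeta_term_dxdy k j x y)"
    by (rule DERIV_imp_deriv)
qed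

section \<open>The sign of the mixed derivative\<close>

lemma abs_sin_nat_mult_le: "\<bar>sin (real n * \<theta>)\<bar> \<le> real n * \<bar>sin \<theta>\<bar>"
proof (induction n)
  case (Suc n)
  have "sin (real (Suc n) * \<theta>) = sin (real n * \<theta>) * cos \<theta> + cos (real n * \<theta>) * sin \<theta>"
    by (simp add: distrib_right sin_add)
  then have "\<bar>sin (real (Suc n) * \<theta>)\<bar> \<le> \<bar>sin (real n * \<theta>)\<bar> * \<bar>cos \<theta>\<bar> + \<bar>cos (real n * \<theta>)\<bar> * \<bar>sin \<theta>\<bar>"
    by (simp add: abs_mult[symmetric] abs_triangle_ineq)
  also have "\<dots> \<le> \<bar>sin (real n * \<theta>)\<bar> * 1 + 1 * \<bar>sin \<theta>\<bar>"
    by (intro add_mono mult_mono) auto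
  finally show ?case
    using Suc.IH by (simp add: algebra_simps)
qed simp

lemma real_power_5_le_32_power: "1 \<le> j \<Longrightarrow> real j ^ 5 \<le> 32 ^ (j - 1)"
proof (induction j rule: nat_induct_at_least)
  case (Suc n)
  have "real (Suc n) ^ 5 \<le> (2 * real n) ^ 5"
    using Suc.hyps by (intro power_mono) auto
  also have "\<dots> \<le> 32 * 32 ^ (n - 1)"
    using Suc.IH by (simp add: power_mult_distrib)
  also have "\<dots> = 32 ^ (Suc n - 1)"
    using Suc.hyps by (cases n) auto
  finally show ?case .
qed simp

lemma cubic_profile_scale_le:
  fixes n y c :: real
  assumes n: "1 \<le> n" and y: "0 < y" and c: "0 \<le> c"
  shows "(n * c) ^ 3 + 3 * (n * c)\<^sup>2 / y + 6 * (n * c) / y\<^sup>2 + 6 / y ^ 3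
    \<le> n ^ 3 * (c ^ 3 + 3 * c\<^sup>2 / y + 6 * c / y\<^sup>2 + 6 / y ^ 3)"
proof -
  have "n\<^sup>2 \<le> n ^ 3" "n \<le> n ^ 3" "1 \<le> n ^ 3"
    using n by (auto intro: power_increasing[of 1 _ n, simplified] power_increasing)
  then have "n\<^sup>2 * (3 * c\<^sup>2 / y) + n * (6 * c / y\<^sup>2) + 1 * (6 / y ^ 3)
      \<le> n ^ 3 * (3 * c\<^sup>2 / y) + n ^ 3 * (6 * c / y\<^sup>2) + n ^ 3 * (6 / y ^ 3)"
    using y c by (intro add_mono mult_right_mono) auto
  then show ?thesis
    by (simp add: power_mult_distrib algebra_simps)
qed

lemma zeta_term_dxdy_0_1:
  "zeta_term_dxdy 0 1 x y = pi\<^sup>2 * sin (2 * pi * x) * exp (- (2 * pi * y)) *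
     ((2 * pi) ^ 3 + 3 * (2 * pi)\<^sup>2 / y + 6 * (2 * pi) / y\<^sup>2 + 6 / y ^ 3)"
  by (simp add: zeta_term_dxdy_def zeta_amp_def zeta_freq_def cos_weight_def power2_eq_square)

lemma abs_zeta_term_dxdy_le_lead:
  assumes sin: "0 \<le> sin (2 * pi * x)" and y: "0 < y" and j: "1 \<le> j"
  shows "\<bar>zeta_term_dxdy k j x y\<bar>
    \<le> zeta_term_dxdy 0 1 x y * ((32 * exp (- (2 * pi * y))) ^ (j - 1) * exp (- (2 * pi * y)) ^ k)"
proof -
  define r where "r = exp (- (2 * pi * y))"
  define P where "P = (2 * pi) ^ 3 + 3 * (2 * pi)\<^sup>2 / y + 6 * (2 * pi) / y\<^sup>2 + 6 / y ^ 3"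
  define N where "N = j * Suc k"
  define m where "m = real (Suc k)"
  define C where "C = zeta_freq k j"
  have r: "0 < r" "r \<le> 1"
    using y by (auto simp: r_def)
  have N: "real N = real j * m" "1 \<le> N" "j + k \<le> N"
    using j by (auto simp: N_def m_def algebra_simps)
  have C: "C = 2 * pi * real N"
    by (simp add: C_def zeta_freq_def N(1) m_def)
  have "0 < m"
    by (simp add: m_def)
  have amp: "zeta_amp k j = pi / (2 * m ^ 5)"
    using j by (simp add: zeta_amp_def cos_weight_def m_def)
  have sinb: "\<bar>sin (C * x)\<bar> \<le> real N * sin (2 * pi * x)"
    using abs_sin_nat_mult_le[of N "2 * pi * x"] sin by (simp add: C algebra_simps)
  have poly: "C ^ 3 + 3 * C\<^sup>2 / y + 6 * C / y\<^sup>2 + 6 / y ^ 3 \<le> real N ^ 3 * P"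
    using cubic_profile_scale_le[of "real N" y "2 * pi"] N(2) y by (simp add: C P_def mult.commute)
  have "exp (- (C * y)) = r ^ N"
    by (simp add: C r_def algebra_simps flip: exp_of_nat_mult)
  moreover have "0 \<le> C"
    by (simp add: C)
  ultimately have "\<bar>zeta_term_dxdy k j x y\<bar>
      = pi / (2 * m ^ 5) * C * \<bar>sin (C * x)\<bar> * (r ^ N * (C ^ 3 + 3 * C\<^sup>2 / y + 6 * C / y\<^sup>2 + 6 / y ^ 3))"
    using y r unfolding zeta_term_dxdy_def C_def[symmetric] amp by (simp add: abs_mult m_def)
  also have "\<dots> \<le> pi / (2 * m ^ 5) * C * (real N * sin (2 * pi * x)) * (r ^ N * (real N ^ 3 * P))"
    using sinb poly r \<open>0 \<le> C\<close> y sin by (intro mult_mono mult_left_mono) (auto simp: m_def)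
  also have "\<dots> = pi\<^sup>2 * sin (2 * pi * x) * P * real j ^ 5 * r ^ N"
    using N(1) \<open>0 < m\<close> by (simp add: C field_simps eval_nat_numeral)
  also have "\<dots> \<le> pi\<^sup>2 * sin (2 * pi * x) * P * 32 ^ (j - 1) * (r * (r ^ (j - 1) * r ^ k))"
  proof (intro mult_mono mult_left_mono)
    show "real j ^ 5 \<le> 32 ^ (j - 1)"
      using j by (rule real_power_5_le_32_power)
    have "r ^ N \<le> r ^ (1 + (j - 1) + k)"
      using N(3) j r by (intro power_decreasing) auto
    then show "r ^ N \<le> r * (r ^ (j - 1) * r ^ k)"
      by (simp add: power_add)
  qed (use sin y r in \<open>auto simp: P_def\<close>)
  also have "\<dots> = zeta_term_dxdy 0 1 x y * ((32 * r) ^ (j - 1) * r ^ k)"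
    unfolding zeta_term_dxdy_0_1 r_def[symmetric] P_def[symmetric] by (simp add: power_mult_distrib)
  finally show ?thesis
    by (simp add: r_def)
qed

lemma zeta_term_dxdy_ge:
  assumes sin: "0 \<le> sin (2 * pi * x)" and y: "0 < y"
  shows "zeta_term_dxdy 0 1 x y * ((if k = 0 \<and> j = 1 then 2 else 0) -
      (if j = 0 then 0 else (32 * exp (- (2 * pi * y))) ^ (j - 1) * exp (- (2 * pi * y)) ^ k))
    \<le> zeta_term_dxdy k j x y"
proof (cases "j = 0")
  case True
  then show ?thesis
    by (simp add: zeta_term_dxdy_def zeta_freq_def)
next
  case False
  then have "\<bar>zeta_term_dxdy k j x y\<bar>
      \<le> zeta_term_dxdy 0 1 x y * ((32 * exp (- (2 * pi * y))) ^ (j - 1) * exp (- (2 * pi * y)) ^ k)"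
    using abs_zeta_term_dxdy_le_lead[OF sin y] by simp
  then show ?thesis
    using False by (cases "k = 0 \<and> j = 1") auto
qed

lemma exp_minus_two_pi_le:
  assumes "sqrt 3 / 2 \<le> y"
  shows "exp (- (2 * pi * y)) \<le> 1 / 80"
proof -
  have "17 / 10 \<le> sqrt 3"
    by (rule real_le_rsqrt) (simp add: power2_eq_square)
  then have "3 * (17 / 10) \<le> pi * sqrt 3"
    using pi_gt3 by (intro mult_mono) auto
  also have "pi * sqrt 3 \<le> 2 * pi * y"
    using assms by (simp add: field_simps)
  finally have y: "51 / 10 \<le> 2 * pi * y"
    by simp
  have "(80::real) \<le> (248 / 100) ^ 5"
    by (simp add: eval_nat_numeral)
  also have "\<dots> \<le> ((1 + (51 / 10) / 20) ^ 4) ^ 5"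
    by (intro power_mono) (simp_all add: eval_nat_numeral)
  also have "\<dots> = (1 + (51 / 10) / 20) ^ 20"
    by (simp flip: power_mult)
  also have "\<dots> \<le> exp ((51 / 10) / 20) ^ 20"
    by (intro power_mono exp_ge_add_one_self) simp
  also have "\<dots> = exp (51 / 10)"
    by (simp flip: exp_of_nat_mult)
  also have "\<dots> \<le> exp (2 * pi * y)"
    using y by simp
  finally show ?thesis
    by (simp add: exp_minus field_simps)
qed

lemma zeta_term_dxdy_series_nonneg:
  assumes sin: "0 \<le> sin (2 * pi * x)" and y: "1/2 < y" and r80: "exp (- (2 * pi * y)) \<le> 1 / 80"
  shows "0 \<le> (\<Sum>k. \<Sum>j. zeta_term_dxdy k j x y)"
proof -
  define r where "r = exp (- (2 * pi * y))"
  define Q where "Q = zeta_term_dxdy 0 1 x y"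
  have r: "0 < r" "r \<le> 1 / 80"
    using r80 by (simp_all add: r_def)
  have Q: "0 \<le> Q"
    using sin y unfolding Q_def zeta_term_dxdy_0_1 by (intro mult_nonneg_nonneg add_nonneg_nonneg) auto
  define L where "L k j = Q * ((if k = 0 \<and> j = 1 then 2 else 0) - (if j = 0 then 0 else (32 * r) ^ (j - 1) * r ^ k))"
    for k j
  have L: "L k j \<le> zeta_term_dxdy k j x y" for k j
    unfolding L_def Q_def r_def by (rule zeta_term_dxdy_ge[OF sin]) (use y in simp)
  have "(\<lambda>j. if j = 0 then 0 else (32 * r) ^ (j - 1) * r ^ k) sums (r ^ k / (1 - 32 * r))" for k
  proof -
    have "(\<lambda>j. (32 * r) ^ j * r ^ k) sums (1 / (1 - 32 * r) * r ^ k)"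
      using r by (intro sums_mult2 geometric_sums) simp
    then have "(\<lambda>j. (\<lambda>j. if j = 0 then 0 else (32 * r) ^ (j - 1) * r ^ k) (Suc j)) sums (r ^ k / (1 - 32 * r))"
      by simp
    then show ?thesis
      by (subst (asm) sums_Suc_iff) simp
  qed
  moreover have "(\<lambda>j. if k = 0 \<and> j = 1 then 2 else 0) sums (if k = 0 then 2 else (0::real))" for k
    using sums_single[of 1 "\<lambda>_. 2::real"] by (cases "k = 0") simp_all
  ultimately have row: "(\<lambda>j. L k j) sums (Q * ((if k = 0 then 2 else 0) - r ^ k / (1 - 32 * r)))" for k
    unfolding L_def by (intro sums_mult sums_diff)
  have "(\<lambda>k. Q * ((if k = 0 then 2 else 0) - r ^ k / (1 - 32 * r))) sums (Q * (2 - 1 / (1 - r) / (1 - 32 * r)))"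
    using r sums_single[of 0 "\<lambda>_. 2::real"]
    by (intro sums_mult sums_diff sums_divide geometric_sums) simp_all
  with row have "(\<lambda>k. \<Sum>j. L k j) sums (Q * (2 - 1 / (1 - r) / (1 - 32 * r)))"
    by (simp add: sums_iff)
  moreover have "(\<Sum>k. \<Sum>j. L k j) \<le> (\<Sum>k. \<Sum>j. zeta_term_dxdy k j x y)"
    using row L deriv_deriv_epstein_zeta_3(2,3)[OF y] calculation
    by (intro suminf_le sums_le[OF _ row summable_sums]) (auto simp: sums_iff)
  moreover have "1 / 2 \<le> (1 - r) * (1 - 32 * r)"
  proof -
    have "(79 / 80) * (1 - 32 * (1 / 80)) \<le> (1 - r) * (1 - 32 * r)"
      using r by (intro mult_mono) auto
    then show ?thesis
      by simp
  qed
  then have "0 \<le> Q * (2 - 1 / (1 - r) / (1 - 32 * r))"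
    using r Q by (intro mult_nonneg_nonneg) (simp_all add: field_simps)
  ultimately show ?thesis
    by (simp add: sums_iff)
qed

theorem lemma4p23:
  fixes x y :: real
  assumes "0 \<le> x" and "x \<le> 1/2" and "sqrt 3 / 2 \<le> y"
  shows "deriv (\<lambda>t. deriv (\<lambda>u. epstein_zeta 3 (Complex u t)) x) y \<ge> 0"
proof -
  have "1 < sqrt 3"
    by simp
  then have y: "1/2 < y"
    using assms(3) by linarith
  have "0 \<le> sin (2 * pi * x)"
    using assms(1,2) by (intro sin_ge_zero) auto
  from zeta_term_dxdy_series_nonneg[OF this y exp_minus_two_pi_le[OF assms(3)]]
  show ?thesis
    by (simp add: deriv_deriv_epstein_zeta_3(1)[OF y])
qed

end
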